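(* Let $(X,\alpha)$ be a Cantor minimal system and let $c:X\to\mathbb{Z}_2$ be a continuous map. Suppose $PS(\alpha)\neq PS(\alpha\times c)$. Then there exists $n\in\mathbb{N}$ such that $2^{n-1}\in PS(\alpha)$, $2^n\notin PS(\alpha)$ and $PS(\alpha\times c)=2PS(\alpha)\cup PS(\alpha)$. Furthermore, if $f\in C(X,\mathbb{Z})$ satisfies $2^{n-1}[f]=[1_X]$ in $K^0(X,\alpha)$, then $[c]=[f]+2K^0(X,\alpha)$ in $K^0(X,\alpha)/2K^0(X,\alpha)$.
   Context: A Cantor minimal system $(X,\alpha)$ is a Cantor set $X$ with a homeomorphism $\alpha$ having no nontrivial closed invariant subsets. $\mathbb{N}=\{1,2,\dots\}$. $\alpha\times c$ is the homeomorphism $(x,k)\mapsto(\alpha(x),k+c(x))$ of $X\times\mathbb{Z}_2$. $K^0(X,\alpha)=C(X,\mathbb{Z})/\{f-f\circ\alpha^{-1}:f\in C(X,\mathbb{Z})\}$ with class $[f]$; $K^0(X,\alpha)/2K^0(X,\alpha)$ is identified with $C(X,\mathbb{Z}_2)/\{f-f\circ\alpha^{-1}:f\in C(X,\mathbb{Z}_2)\}$, and $[c]$ is the class of $c$ (equivalently, the class mod $2K^0$ of the $\{0,1\}$-valued integer lift of $c$). For a homeomorphism $\gamma$ of a compact space $Z$, the periodic spectrum $PS(\gamma)$ is the set of $p\in\mathbb{N}$ for which there is a clopen $U\subset Z$ with $U,\gamma(U),\dots,\gamma^{p-1}(U)$ pairwise disjoint and covering $Z$. $2PS(\alpha)=\{2p:p\in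 PS(\alpha)\}$. *)

theory Defs
  imports "HOL-Analysis.Analysis"
begin

definition cantor_set :: "'a::metric_space set \<Rightarrow> bool" where
  "cantor_set X \<longleftrightarrow> X \<noteq> {} \<and> compact X \<and> (\<forall>x\<in>X. x islimpt X) \<and>
     (\<forall>S. S \<subseteq> X \<and> connected S \<longrightarrow> (\<exists>x. S \<subseteq> {x}))"

definition cantor_minimal_system :: "'a::metric_space set \<Rightarrow> ('a \<Rightarrow> 'a) \<Rightarrow> bool" where
  "cantor_minimal_system X \<alpha> \<longleftrightarrow> cantor_set X \<and>
     (\<exists>\<beta>. homeomorphism X X \<alpha> \<beta>) \<and>
     (\<forall>Y. Y \<subseteq> X \<and> closed Y \<and> \<alpha> ` Y = Y \<longrightarrow> Y = {} \<or> Y = X)"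

definition periodic_spectrum :: "'b::topological_space set \<Rightarrow> ('b \<Rightarrow> 'b) \<Rightarrow> nat set" where
  "periodic_spectrum Z \<gamma> = {p. p \<ge> 1 \<and> (\<exists>U. openin (top_of_set Z) U \<and> closedin (top_of_set Z) U \<and>
      (\<forall>i<p. \<forall>j<p. i \<noteq> j \<longrightarrow> (\<gamma> ^^ i) ` U \<inter> (\<gamma> ^^ j) ` U = {}) \<and>
      (\<Union>i<p. (\<gamma> ^^ i) ` U) = Z)}"

text \<open>The skew product alpha x c on X x Z_2, with Z_2 = {0,1} :: int set.\<close>
definition skew :: "('a \<Rightarrow> 'a) \<Rightarrow> ('a \<Rightarrow> int) \<Rightarrow> 'a \<times> int \<Rightarrow> 'a \<times> int" where
  "skew \<alpha> c = (\<lambda>(x,k). (\<alpha> x, (k + c x) mod 2))"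

definition coboundary :: "'a::topological_space set \<Rightarrow> ('a \<Rightarrow> 'a) \<Rightarrow> ('a \<Rightarrow> int) \<Rightarrow> bool" where
  "coboundary X \<alpha> g \<longleftrightarrow> (\<exists>h::'a \<Rightarrow> int. continuous_on X h \<and>
      (\<forall>x\<in>X. g x = h x - h (inv_into X \<alpha> x)))"

text \<open>Equality of classes [f] = [g] in K^0(X,alpha).\<close>
definition K0_eq :: "'a::topological_space set \<Rightarrow> ('a \<Rightarrow> 'a) \<Rightarrow> ('a \<Rightarrow> int) \<Rightarrow> ('a \<Rightarrow> int) \<Rightarrow> bool" where
  "K0_eq X \<alpha> f g \<longleftrightarrow> coboundary X \<alpha> (\<lambda>x. f x - g x)"

text \<open>Equality of classes in K^0(X,alpha)/2K^0(X,alpha):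
  f - g \<in> 2 C(X,Z) + coboundaries.\<close>
definition K0_mod2_eq :: "'a::topological_space set \<Rightarrow> ('a \<Rightarrow> 'a) \<Rightarrow> ('a \<Rightarrow> int) \<Rightarrow> ('a \<Rightarrow> int) \<Rightarrow> bool" where
  "K0_mod2_eq X \<alpha> f g \<longleftrightarrow> (\<exists>u::'a \<Rightarrow> int. continuous_on X u \<and>
      coboundary X \<alpha> (\<lambda>x. f x - g x - 2 * u x))"

end

theory Submission
  imports Defs
begin

text \<open>
  For a homeomorphism \<open>g\<close> of a compact space, \<open>p \<in> PS(g)\<close> holds exactly when there is a
  continuous integer-valued clock \<open>\<Lambda>\<close> with \<open>\<Lambda> \<circ> g - \<Lambda> \<equiv> 1 (mod p)\<close>; this is the
  concrete form of \<open>[1] \<in> p K\<^sup>0\<close>.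

  Restrict a clock of period \<open>q\<close> of \<open>\<alpha> \<times> c\<close> to the sheets \<open>X \<times> {0}\<close> and \<open>X \<times> {1}\<close>.
  Modulo \<open>q\<close> their difference is preserved by \<open>\<alpha>\<close> where \<open>c = 0\<close> and negated where
  \<open>c = 1\<close>, so by minimality it only takes the values \<open>\<plusminus>a\<close>. If \<open>2a \<not>\<equiv> 0\<close> the sheets
  glue to a clock of \<open>\<alpha>\<close> of period \<open>q\<close>, and if \<open>a \<equiv> 0\<close> the sheet \<open>X \<times> {0}\<close> already is
  one. Hence \<open>q \<notin> PS(\<alpha>)\<close> forces \<open>q = 2p\<close> together with a twisted clock \<open>l\<close>,
  \<open>l \<circ> \<alpha> - l - 1 \<equiv> p c (mod 2p)\<close>. Conversely a twisted clock yields \<open>p \<in> PS(\<alpha>)\<close> and,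
  via \<open>(x, k) \<mapsto> l x + p k\<close>, \<open>2p \<in> PS(\<alpha> \<times> c)\<close>. Writing \<open>p = 2\<^sup>n\<^sup>-\<^sup>1 m\<close> with \<open>m\<close> odd,
  closure of \<open>PS(\<alpha>)\<close> under divisors and lcms gives the spectrum formula, and comparing
  the twisted clock with \<open>[2\<^sup>n\<^sup>-\<^sup>1 f] = [1]\<close> gives \<open>[c] = [f]\<close> modulo \<open>2 K\<^sup>0\<close>.
\<close>

lemma continuous_on_int_compose:
  fixes f :: "'b::topological_space \<Rightarrow> int"
  assumes "continuous_on S f"
  shows "continuous_on S (\<lambda>x. \<phi> (f x))"
  using continuous_on_compose[OF assms, of \<phi>] continuous_on_discrete by (simp add: o_def)

lemma continuous_on_int_combine:
  fixes f g :: "'b::topological_space \<Rightarrow> int"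
  assumes f: "continuous_on S f" and g: "continuous_on S g"
  shows "continuous_on S (\<lambda>x. F (f x) (g x))"
proof (subst continuous_on_open_gen[of _ S UNIV], simp, intro allI impI)
  fix V
  have "S \<inter> (\<lambda>x. F (f x) (g x)) -` V =
      (\<Union>(a, b) \<in> {(a, b). F a b \<in> V}. (S \<inter> f -` {a}) \<inter> (S \<inter> g -` {b}))"
    by auto
  moreover have "openin (top_of_set S) ((S \<inter> f -` {a}) \<inter> (S \<inter> g -` {b}))" for a b
    by (intro openin_Int continuous_openin_preimage_gen[OF f open_discrete]
        continuous_openin_preimage_gen[OF g open_discrete])
  ultimately show "openin (top_of_set S) (S \<inter> (\<lambda>x. F (f x) (g x)) -` V)"
    by (auto intro: openin_Union)
qed

lemma funpow_image_self: "g ` S = S \<Longrightarrow> (g ^^ i) ` S = S"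
  by (induction i) (simp_all add: image_comp[symmetric, unfolded comp_def])

lemma continuous_on_funpow:
  assumes "continuous_on S g" "g ` S \<subseteq> S"
  shows "continuous_on S (g ^^ i)"
proof (induction i)
  case (Suc i)
  have "(g ^^ i) ` S \<subseteq> S"
    using assms(2) by (induction i) auto
  with continuous_on_compose[OF Suc continuous_on_subset[OF assms(1)]] show ?case
    by (simp add: comp_def)
qed (simp add: continuous_on_id)

lemma two_power_odd_decomposition:
  fixes p :: nat
  assumes "p > 0"
  obtains k m where "p = 2 ^ k * m" "odd m"
  using assms
proof (induction p arbitrary: thesis rule: less_induct)
  case (less p)
  show ?case
  proof (cases "odd p")
    case True
    then show ?thesis using less.prems(1)[of 0 p] by simp
  next
    case False
    then obtain p' where "p = 2 * p'" by blast
    with less.prems(2) have "p' < p" "p' > 0" by auto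
    with less.IH obtain k m where "p' = 2 ^ k * m" "odd m" by blast
    with \<open>p = 2 * p'\<close> show ?thesis using less.prems(1)[of "Suc k" m] by simp
  qed
qed

lemma odd_div_if_not_dvd:
  fixes L k m :: nat
  assumes "2 ^ k * m dvd L" "\<not> 2 ^ Suc k dvd L"
  shows "odd (L div (2 ^ k * m))"
proof
  assume "even (L div (2 ^ k * m))"
  then obtain t where t: "L div (2 ^ k * m) = 2 * t" ..
  have "L = 2 ^ k * m * (L div (2 ^ k * m))"
    using assms(1) by simp
  also have "\<dots> = 2 ^ Suc k * (m * t)"
    unfolding t by (simp add: ac_simps)
  finally show False
    using assms(2) by (metis dvd_triv_left)
qed

lemma dvd_double_cases:
  fixes a q :: int
  assumes "0 \<le> a" "a < q" "q dvd 2 * a"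
  shows "a = 0 \<or> q = 2 * a"
proof -
  obtain t where t: "2 * a = q * t"
    using assms(3) ..
  then have "q * 0 \<le> q * t" "q * t < q * 2"
    using assms(1,2) by linarith+
  then have "t = 0 \<or> t = 1"
    using assms by (simp only: mult_le_cancel_left_pos mult_less_cancel_left_pos) auto
  then show ?thesis
    using t by auto
qed

section \<open>Clocks and the periodic spectrum\<close>

definition clock :: "'b::topological_space set \<Rightarrow> ('b \<Rightarrow> 'b) \<Rightarrow> nat \<Rightarrow> ('b \<Rightarrow> int) \<Rightarrow> bool" where
  "clock S g p \<Lambda> \<longleftrightarrow> continuous_on S \<Lambda> \<and> (\<forall>z\<in>S. int p dvd \<Lambda> (g z) - \<Lambda> z - 1)"

lemma periodic_spectrum_pos: "p \<in> periodic_spectrum S g \<Longrightarrow> p \<ge> 1"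
  unfolding periodic_spectrum_def by simp

lemma clock_funpow:
  assumes "clock S g p \<Lambda>" "g ` S = S" "z \<in> S"
  shows "int p dvd \<Lambda> ((g ^^ i) z) - \<Lambda> z - int i"
proof (induction i)
  case (Suc i)
  have "(g ^^ i) z \<in> S"
    using funpow_image_self[OF assms(2)] assms(3) by blast
  then have "int p dvd \<Lambda> (g ((g ^^ i) z)) - \<Lambda> ((g ^^ i) z) - 1"
    using assms(1) unfolding clock_def by blast
  from dvd_add[OF this Suc.IH] show ?case by (simp add: algebra_simps)
qed simp

lemma clock_dvd: "clock S g p \<Lambda> \<Longrightarrow> d dvd p \<Longrightarrow> clock S g d \<Lambda>"
  unfolding clock_def by (meson dvd_trans int_dvd_int_iff)

lemma clock_lcm:
  assumes \<Lambda>\<^sub>1: "clock S g p \<Lambda>\<^sub>1" and \<Lambda>\<^sub>2: "clock S g q \<Lambda>\<^sub>2" and p: "p \<ge> 1"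
  obtains \<Lambda> where "clock S g (lcm p q) \<Lambda>"
proof -
  define G where "G = gcd (int p) (int q)"
  obtain a b where bezout: "a * int p + b * int q = G"
    unfolding G_def using bezout_int by blast
  define u v where "u = int p div G" and "v = int q div G"
  have "G > 0" unfolding G_def using p by simp
  have p_eq: "int p = G * u" and q_eq: "int q = G * v"
    unfolding u_def v_def G_def by simp_all
  with bezout \<open>G > 0\<close> have uv: "a * u + b * v = 1"
    by (metis (no_types, opaque_lifting) distrib_left mult.left_commute mult_cancel_left1 order_less_irrefl)
  define \<Lambda> where "\<Lambda> z = a * u * \<Lambda>\<^sub>2 z + b * v * \<Lambda>\<^sub>1 z" for z
  have "int (lcm p q) dvd G * u * v"
    using p_eq q_eq by (simp add: lcm_least mult.commute mult.left_commute flip: lcm_int_int_eq)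
  moreover have "G * u * v dvd \<Lambda> (g z) - \<Lambda> z - 1" if "z \<in> S" for z
  proof -
    have "int q * u dvd u * (\<Lambda>\<^sub>2 (g z) - \<Lambda>\<^sub>2 z - 1)" "int p * v dvd v * (\<Lambda>\<^sub>1 (g z) - \<Lambda>\<^sub>1 z - 1)"
      using \<Lambda>\<^sub>1 \<Lambda>\<^sub>2 that unfolding clock_def by (simp_all add: mult.commute mult_dvd_mono)
    moreover have "G * u * v = int q * u" "G * u * v = int p * v"
      by (simp_all add: p_eq q_eq ac_simps)
    ultimately have "G * u * v dvd a * (u * (\<Lambda>\<^sub>2 (g z) - \<Lambda>\<^sub>2 z - 1)) + b * (v * (\<Lambda>\<^sub>1 (g z) - \<Lambda>\<^sub>1 z - 1))"
      by (metis dvd_add dvd_mult)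
    also have "\<dots> = \<Lambda> (g z) - \<Lambda> z - 1"
      unfolding \<Lambda>_def using uv by (simp add: algebra_simps)
    finally show ?thesis .
  qed
  moreover have "continuous_on S \<Lambda>"
    using \<Lambda>\<^sub>1 \<Lambda>\<^sub>2 continuous_on_int_combine[of S \<Lambda>\<^sub>2 \<Lambda>\<^sub>1 "\<lambda>s t. a * u * s + b * v * t"]
    unfolding clock_def \<Lambda>_def by blast
  ultimately show thesis
    by (intro that) (auto simp: clock_def intro: dvd_trans)
qed

lemma clock_funpow_image:
  assumes gS: "g ` S = S" and \<Lambda>: "clock S g p \<Lambda>"
  shows "(g ^^ i) ` {z \<in> S. int p dvd \<Lambda> z} = {z \<in> S. \<Lambda> z mod int p = int i mod int p}"
proof (intro set_eqI iffI)
  fix y assume "y \<in> (g ^^ i) ` {z \<in> S. int p dvd \<Lambda> z}"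
  then obtain z where "z \<in> S" "int p dvd \<Lambda> z" "y = (g ^^ i) z"
    by blast
  moreover have "int p dvd (\<Lambda> y - \<Lambda> z - int i) + \<Lambda> z"
    using clock_funpow[OF \<Lambda> gS \<open>z \<in> S\<close>, of i] \<open>int p dvd \<Lambda> z\<close>
    unfolding \<open>y = (g ^^ i) z\<close> by (rule dvd_add)
  ultimately show "y \<in> {z \<in> S. \<Lambda> z mod int p = int i mod int p}"
    using funpow_image_self[OF gS, of i] by (auto simp: mod_eq_dvd_iff)
next
  fix y assume "y \<in> {z \<in> S. \<Lambda> z mod int p = int i mod int p}"
  then have "y \<in> (g ^^ i) ` S" and y: "int p dvd \<Lambda> y - int i"
    using funpow_image_self[OF gS, of i] by (auto simp: mod_eq_dvd_iff)
  then obtain z where z: "z \<in> S" "y = (g ^^ i) z" by blast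
  with clock_funpow[OF \<Lambda> gS z(1), of i] have "int p dvd (\<Lambda> y - int i) - (\<Lambda> y - \<Lambda> z - int i)"
    using y by (blast intro: dvd_diff)
  with z show "y \<in> (g ^^ i) ` {z \<in> S. int p dvd \<Lambda> z}"
    by auto
qed

lemma periodic_spectrum_if_clock:
  assumes gS: "g ` S = S" and p: "p \<ge> 1" and \<Lambda>: "clock S g p \<Lambda>"
  shows "p \<in> periodic_spectrum S g"
proof -
  define U where "U = {z \<in> S. int p dvd \<Lambda> z}"
  note level = clock_funpow_image[OF gS \<Lambda>, folded U_def]
  have cont: "continuous_on S \<Lambda>"
    using \<Lambda> unfolding clock_def by blast
  have U_eq: "U = S \<inter> \<Lambda> -` {v. int p dvd v}"
    unfolding U_def by blast
  have "openin (top_of_set S) U"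
    unfolding U_eq by (rule continuous_openin_preimage_gen[OF cont open_discrete])
  moreover have "closedin (top_of_set S) U"
    unfolding U_eq by (rule continuous_closedin_preimage[OF cont]) (simp add: closed_def open_discrete)
  moreover have "(g ^^ i) ` U \<inter> (g ^^ j) ` U = {}" if "i < p" "j < p" "i \<noteq> j" for i j
    using that by (auto simp: level)
  moreover have "(\<Union>i<p. (g ^^ i) ` U) = S"
  proof (intro equalityI subsetI)
    fix z assume "z \<in> S"
    then have "z \<in> (g ^^ nat (\<Lambda> z mod int p)) ` U" "nat (\<Lambda> z mod int p) < p"
      using p by (simp_all add: level nat_less_iff)
    then show "z \<in> (\<Union>i<p. (g ^^ i) ` U)" by blast
  qed (auto simp: level)
  ultimately show ?thesis
    unfolding periodic_spectrum_def using p by blast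
qed

locale compact_invertible_system =
  fixes S :: "'b::t2_space set" and g :: "'b \<Rightarrow> 'b"
  assumes compact: "compact S" and continuous: "continuous_on S g"
    and surj: "g ` S = S" and inj: "inj_on g S"
begin

lemma funpow_image_closed:
  assumes "closedin (top_of_set S) U"
  shows "closed ((g ^^ i) ` U)"
proof -
  have "compact U"
    using assms compact by (metis closedin_compact)
  moreover have "continuous_on U (g ^^ i)"
    using continuous_on_subset[OF continuous_on_funpow[OF continuous] closedin_imp_subset[OF assms]] surj
    by blast
  ultimately show ?thesis
    by (blast intro: compact_imp_closed compact_continuous_image)
qed

lemma tower_return:
  assumes p: "p \<ge> 1" and "U \<subseteq> S"
    and disjoint: "\<And>i j. i < p \<Longrightarrow> j < p \<Longrightarrow> i \<noteq> j \<Longrightarrow> (g ^^ i) ` U \<inter> (g ^^ j) ` U = {}"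
    and cover: "(\<Union>i<p. (g ^^ i) ` U) = S"
  shows "(g ^^ p) ` U \<subseteq> U"
proof
  define T where "T i = (g ^^ i) ` U" for i
  have T_Suc: "T (Suc i) = g ` T i" for i
    unfolding T_def by (simp add: image_comp)
  have T_subset: "T i \<subseteq> S" for i
    using \<open>U \<subseteq> S\<close> funpow_image_self[OF surj, of i] unfolding T_def by blast
  fix y assume y: "y \<in> (g ^^ p) ` U"
  then obtain k where k: "k < p" "y \<in> T k"
    using T_subset cover unfolding T_def by blast
  show "y \<in> U"
  proof (cases k)
    case (Suc k')
    have "y \<in> g ` T (p - 1)"
      using y T_Suc[of "p - 1"] p unfolding T_def by (simp add: Suc_diff_1)
    moreover have "y \<in> g ` T k'"
      using k T_Suc[of k'] Suc by simp
    ultimately have "T (p - 1) \<inter> T k' \<noteq> {}"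
      using inj T_subset by (auto dest: inj_onD)
    moreover have "k' < p" "k' \<noteq> p - 1"
      using k Suc by auto
    ultimately show ?thesis
      using disjoint[of "p - 1" k'] p unfolding T_def by simp
  qed (use k in \<open>simp add: T_def\<close>)
qed

lemma clock_if_periodic_spectrum:
  assumes "p \<in> periodic_spectrum S g"
  obtains \<Lambda> where "clock S g p \<Lambda>"
proof -
  obtain U where p: "p \<ge> 1" and U: "closedin (top_of_set S) U"
    and disjoint: "\<And>i j. i < p \<Longrightarrow> j < p \<Longrightarrow> i \<noteq> j \<Longrightarrow> (g ^^ i) ` U \<inter> (g ^^ j) ` U = {}"
    and cover: "(\<Union>i<p. (g ^^ i) ` U) = S"
    using assms unfolding periodic_spectrum_def by blast
  define T where "T i = (g ^^ i) ` U" for i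
  have T_p: "T p \<subseteq> T 0"
    using tower_return[OF p closedin_imp_subset[OF U] disjoint cover] unfolding T_def by simp
  define \<Lambda> where "\<Lambda> z = int (LEAST i. z \<in> T i)" for z
  have \<Lambda>_eq: "\<Lambda> z = int i" if "i < p" "z \<in> T i" for i z
  proof -
    have "(LEAST i. z \<in> T i) = i"
    proof (rule Least_equality)
      show "i \<le> k" if "z \<in> T k" for k
        using \<open>i < p\<close> \<open>z \<in> T i\<close> that disjoint[of k i] unfolding T_def
        by (cases "k < i") auto
    qed (fact that(2))
    then show ?thesis unfolding \<Lambda>_def by simp
  qed
  have "continuous_on (\<Union>i<p. T i) \<Lambda>"
  proof (rule continuous_on_closed_Union)
    show "continuous_on (T i) \<Lambda>" if "i \<in> {..<p}" for i
      using that \<Lambda>_eq continuous_on_cong[of "T i" "T i" \<Lambda> "\<lambda>_. int i"] by auto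
  qed (simp_all add: T_def funpow_image_closed[OF U])
  moreover have "int p dvd \<Lambda> (g z) - \<Lambda> z - 1" if z: "z \<in> S" for z
  proof -
    obtain i where i: "i < p" "z \<in> T i"
      using z cover unfolding T_def by blast
    have "T (Suc i) = g ` T i"
      unfolding T_def by (simp add: image_comp)
    then have gz: "g z \<in> T (Suc i)"
      using i by simp
    show ?thesis
    proof (cases "Suc i < p")
      case True
      then show ?thesis using \<Lambda>_eq[OF i] \<Lambda>_eq[OF True gz] by simp
    next
      case False
      then have "Suc i = p" using i by simp
      then have "\<Lambda> (g z) = 0" using gz T_p p \<Lambda>_eq[of 0] by auto
      then have "\<Lambda> (g z) - \<Lambda> z - 1 = - int p" using \<Lambda>_eq[OF i] \<open>Suc i = p\<close> by auto
      then show ?thesis by simp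
    qed
  qed
  ultimately have "clock S g p \<Lambda>"
    using cover unfolding clock_def T_def by simp
  then show thesis by (rule that)
qed

lemma periodic_spectrum_dvd:
  assumes "p \<in> periodic_spectrum S g" "d dvd p"
  shows "d \<in> periodic_spectrum S g"
proof -
  obtain \<Lambda> where "clock S g p \<Lambda>"
    using clock_if_periodic_spectrum[OF assms(1)] .
  moreover have "d \<ge> 1"
    using assms periodic_spectrum_pos dvd_pos_nat[of p d] by fastforce
  ultimately show ?thesis
    using periodic_spectrum_if_clock[OF surj] clock_dvd assms(2) by blast
qed

lemma periodic_spectrum_lcm:
  assumes "p \<in> periodic_spectrum S g" "q \<in> periodic_spectrum S g"
  shows "lcm p q \<in> periodic_spectrum S g"
proof -
  obtain \<Lambda>\<^sub>1 \<Lambda>\<^sub>2 where "clock S g p \<Lambda>\<^sub>1" "clock S g q \<Lambda>\<^sub>2"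
    using assms by (meson clock_if_periodic_spectrum)
  then obtain \<Lambda> where "clock S g (lcm p q) \<Lambda>"
    using clock_lcm periodic_spectrum_pos[OF assms(1)] by blast
  moreover have "lcm p q \<ge> 1"
    using periodic_spectrum_pos[OF assms(1)] periodic_spectrum_pos[OF assms(2)]
    by (simp add: Suc_le_eq lcm_pos_nat)
  ultimately show ?thesis
    using periodic_spectrum_if_clock[OF surj] by blast
qed

lemma periodic_spectrum_two_power:
  assumes "p \<in> periodic_spectrum S g" "2 * p \<notin> periodic_spectrum S g"
    and "p = 2 ^ k * m" "odd m"
  shows "2 ^ k \<in> periodic_spectrum S g" "2 ^ Suc k \<notin> periodic_spectrum S g"
proof -
  show "2 ^ k \<in> periodic_spectrum S g"
    using periodic_spectrum_dvd[OF assms(1)] assms(3) by simp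
  show "2 ^ Suc k \<notin> periodic_spectrum S g"
  proof
    assume "2 ^ Suc k \<in> periodic_spectrum S g"
    then have "lcm (2 ^ Suc k) p \<in> periodic_spectrum S g"
      using periodic_spectrum_lcm assms(1) by blast
    moreover have "2 * p dvd lcm (2 ^ Suc k) p"
    proof -
      have "coprime ((2::nat) ^ Suc k) m" using assms(4) by simp
      moreover have "m dvd lcm (2 ^ Suc k) p" using assms(3) by (simp add: dvd_lcmI2)
      ultimately have "2 ^ Suc k * m dvd lcm (2 ^ Suc k) p" by (simp add: divides_mult)
      then show ?thesis using assms(3) by (simp add: mult.assoc)
    qed
    ultimately show False
      using periodic_spectrum_dvd assms(2) by blast
  qed
qed

lemma continuous_on_compose_self: "continuous_on S h \<Longrightarrow> continuous_on S (\<lambda>x. h (g x))"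
  using continuous_on_compose[OF continuous, of h] surj by (simp add: comp_def)

lemma inv_into_continuous: "continuous_on S (inv_into S g)"
proof -
  obtain g' where g': "homeomorphism S S g g'"
    using homeomorphism_compact[OF compact continuous surj inj] by blast
  then have "inv_into S g y = g' y" if "y \<in> S" for y
    using that inj unfolding homeomorphism_def by (metis image_eqI inv_into_f_f)
  then show ?thesis
    using g' continuous_on_cong unfolding homeomorphism_def by metis
qed

lemma coboundary_iff_difference:
  "coboundary S g f \<longleftrightarrow> (\<exists>h. continuous_on S h \<and> (\<forall>x\<in>S. f x = h (g x) - h x))"
proof
  assume "coboundary S g f"
  then obtain h where h: "continuous_on S h" "\<forall>x\<in>S. f x = h x - h (inv_into S g x)"
    unfolding coboundary_def by blast
  have "continuous_on S (h \<circ> inv_into S g)"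
    using continuous_on_compose[OF inv_into_continuous] h(1) surj
    by (metis continuous_on_subset image_subsetI inv_into_into)
  moreover have "\<forall>x\<in>S. f x = (h \<circ> inv_into S g) (g x) - (h \<circ> inv_into S g) x"
    using h(2) inj by simp
  ultimately show "\<exists>h. continuous_on S h \<and> (\<forall>x\<in>S. f x = h (g x) - h x)" by blast
next
  assume "\<exists>h. continuous_on S h \<and> (\<forall>x\<in>S. f x = h (g x) - h x)"
  then obtain h where h: "continuous_on S h" "\<forall>x\<in>S. f x = h (g x) - h x"
    by blast
  have "continuous_on S (h \<circ> g)"
    using continuous_on_compose[OF continuous] h(1) surj by simp
  moreover have "\<forall>x\<in>S. f x = (h \<circ> g) x - (h \<circ> g) (inv_into S g x)"
    using h(2) surj by (simp add: f_inv_into_f)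
  ultimately show "coboundary S g f"
    unfolding coboundary_def by blast
qed

lemma K0_mod2_eq_if_even_difference:
  assumes f: "continuous_on S f" "continuous_on S f'" and h: "continuous_on S h"
    and even: "\<forall>x\<in>S. 2 dvd f x - f' x - (h (g x) - h x)"
  shows "K0_mod2_eq S g f f'"
proof -
  define u where "u x = (f x - f' x - (h (g x) - h x)) div 2" for x
  have "continuous_on S (\<lambda>x. f x - f' x)" "continuous_on S (\<lambda>x. h (g x) - h x)"
    using continuous_on_int_combine[OF f, where F = "(-)"]
      continuous_on_int_combine[OF continuous_on_compose_self[OF h] h, where F = "(-)"] by simp_all
  then have "continuous_on S u"
    unfolding u_def by (rule continuous_on_int_combine[where F = "\<lambda>a b. (a - b) div 2"])
  moreover have "\<forall>x\<in>S. f x - f' x - 2 * u x = h (g x) - h x"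
    using even unfolding u_def by (simp add: dvd_mult_div_cancel)
  ultimately show ?thesis
    unfolding K0_mod2_eq_def coboundary_iff_difference using h by blast
qed

end

section \<open>Minimal systems\<close>

locale minimal_system = compact_invertible_system X \<alpha> for X :: "'a::t2_space set" and \<alpha> +
  assumes nonempty: "X \<noteq> {}"
    and minimal: "\<And>Y. Y \<subseteq> X \<Longrightarrow> closed Y \<Longrightarrow> \<alpha> ` Y = Y \<Longrightarrow> Y = {} \<or> Y = X"
begin

lemma invariant_imp_constant:
  fixes h :: "'a \<Rightarrow> 'c::t1_space"
  assumes h: "continuous_on X h" and invariant: "\<forall>x\<in>X. h (\<alpha> x) = h x"
    and "x \<in> X" "y \<in> X"
  shows "h x = h y"
proof -
  define Y where "Y = {z \<in> X. h z = h y}"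
  have "closed Y"
    unfolding Y_def using h compact compact_imp_closed continuous_closed_preimage_constant by blast
  moreover have "\<alpha> ` Y = Y"
  proof
    show "\<alpha> ` Y \<subseteq> Y"
      unfolding Y_def using invariant surj by force
    show "Y \<subseteq> \<alpha> ` Y"
    proof
      fix z assume z: "z \<in> Y"
      define w where "w = inv_into X \<alpha> z"
      have "w \<in> X" "\<alpha> w = z"
        using z surj unfolding Y_def w_def by (auto intro: inv_into_into f_inv_into_f)
      moreover have "h w = h y"
        using invariant z \<open>w \<in> X\<close> \<open>\<alpha> w = z\<close> unfolding Y_def by force
      ultimately show "z \<in> \<alpha> ` Y"
        unfolding Y_def by blast
    qed
  qed
  ultimately have "Y = X"
    using minimal[of Y] \<open>y \<in> X\<close> unfolding Y_def by blast
  then show ?thesis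
    using \<open>x \<in> X\<close> unfolding Y_def by blast
qed

lemma coboundary_divisible:
  fixes h :: "'a \<Rightarrow> int"
  assumes "k > 0" and h: "continuous_on X h" and dvd: "\<forall>x\<in>X. k dvd h (\<alpha> x) - h x"
  obtains s where "continuous_on X s" "\<forall>x\<in>X. h (\<alpha> x) - h x = k * (s (\<alpha> x) - s x)"
proof -
  obtain x\<^sub>0 where "x\<^sub>0 \<in> X" using nonempty by blast
  have "\<forall>x\<in>X. h (\<alpha> x) mod k = h x mod k"
    using dvd by (simp add: mod_eq_dvd_iff)
  then have const: "h x mod k = h x\<^sub>0 mod k" if "x \<in> X" for x
    using invariant_imp_constant[OF continuous_on_int_compose[OF h] _ that \<open>x\<^sub>0 \<in> X\<close>, of "\<lambda>v. v mod k"]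
    by simp
  have same: "h (\<alpha> x) mod k = h x mod k" if "x \<in> X" for x
    using const[OF that] const[of "\<alpha> x"] that surj by (metis imageI)
  have "h (\<alpha> x) - h x = k * (h (\<alpha> x) div k - h x div k)" if "x \<in> X" for x
    using same[OF that] mult_div_mod_eq[of k "h (\<alpha> x)"] mult_div_mod_eq[of k "h x"]
    unfolding right_diff_distrib by linarith
  moreover have "continuous_on X (\<lambda>x. h x div k)"
    by (rule continuous_on_int_compose[OF h])
  ultimately show thesis
    using that by blast
qed

lemma clock_difference_divisible:
  assumes l: "clock X \<alpha> p l" and \<Lambda>: "clock X \<alpha> L \<Lambda>" and "p dvd L" "p \<ge> 1"
  obtains s where "continuous_on X s"
    "\<forall>x\<in>X. (\<Lambda> (\<alpha> x) - l (\<alpha> x)) - (\<Lambda> x - l x) = int p * (s (\<alpha> x) - s x)"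
proof -
  have "int p > 0"
    using \<open>p \<ge> 1\<close> by simp
  moreover have "continuous_on X (\<lambda>x. \<Lambda> x - l x)"
    using l \<Lambda> unfolding clock_def by (intro continuous_on_int_combine[where F = "(-)"]) auto
  moreover have "\<forall>x\<in>X. int p dvd (\<Lambda> (\<alpha> x) - l (\<alpha> x)) - (\<Lambda> x - l x)"
  proof
    fix x assume "x \<in> X"
    have "int p dvd int L"
      using \<open>p dvd L\<close> by simp
    then have "int p dvd \<Lambda> (\<alpha> x) - \<Lambda> x - 1"
      using \<Lambda> \<open>x \<in> X\<close> dvd_trans unfolding clock_def by blast
    moreover have "int p dvd l (\<alpha> x) - l x - 1"
      using l \<open>x \<in> X\<close> unfolding clock_def by blast
    ultimately have "int p dvd (\<Lambda> (\<alpha> x) - \<Lambda> x - 1) - (l (\<alpha> x) - l x - 1)"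
      by (rule dvd_diff)
    then show "int p dvd (\<Lambda> (\<alpha> x) - l (\<alpha> x)) - (\<Lambda> x - l x)"
      by (simp add: algebra_simps)
  qed
  ultimately show thesis
    using that by (rule coboundary_divisible)
qed

lemma constant_mod_up_to_sign:
  fixes e :: "'a \<Rightarrow> int"
  assumes e: "continuous_on X e" and "q > 0"
    and sign: "\<forall>x\<in>X. q dvd e (\<alpha> x) - e x \<or> q dvd e (\<alpha> x) + e x"
  obtains a where "\<forall>x\<in>X. q dvd e x - a \<or> q dvd e x + a"
proof -
  define G where "G x = min (e x mod q) (- e x mod q)" for x
  have "G (\<alpha> x) = G x" if "x \<in> X" for x
  proof -
    from sign that consider "q dvd e (\<alpha> x) - e x" | "q dvd e (\<alpha> x) + e x" by blast
    then show ?thesis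
    proof cases
      case 1
      have "e (\<alpha> x) mod q = e x mod q" using 1 by (simp add: mod_eq_dvd_iff)
      moreover have "- e (\<alpha> x) mod q = - e x mod q" using calculation by (metis mod_minus_eq)
      ultimately show ?thesis unfolding G_def by simp
    next
      case 2
      have "e (\<alpha> x) mod q = - e x mod q" using 2 by algebra
      moreover have "- e (\<alpha> x) mod q = e x mod q" using 2 by algebra
      ultimately show ?thesis unfolding G_def by (simp add: min.commute)
    qed
  qed
  moreover have "continuous_on X G"
    unfolding G_def by (rule continuous_on_int_compose[OF e])
  moreover obtain x\<^sub>0 where "x\<^sub>0 \<in> X" using nonempty by blast
  ultimately have "G x = G x\<^sub>0" if "x \<in> X" for x
    using invariant_imp_constant[of G x x\<^sub>0] that by blast
  then have "\<forall>x\<in>X. q dvd e x - G x\<^sub>0 \<or> q dvd e x + G x\<^sub>0"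
    unfolding G_def by (smt (verit) dvd_minus_iff dvd_minus_mod)
  then show thesis by (rule that)
qed

end

section \<open>The skew product\<close>

locale skew_system = minimal_system X \<alpha> for X :: "'a::t2_space set" and \<alpha> +
  fixes c :: "'a \<Rightarrow> int"
  assumes continuous_c: "continuous_on X c" and c_values: "c ` X \<subseteq> {0, 1}"
begin

lemma c_cases: "x \<in> X \<Longrightarrow> c x = 0 \<or> c x = 1"
  using c_values by blast

lemma skew_continuous: "continuous_on (X \<times> {0, 1}) (skew \<alpha> c)"
proof -
  have "continuous_on (X \<times> {0, 1}) (\<lambda>z. \<alpha> (fst z))"
    by (rule continuous_on_compose2[OF continuous continuous_on_fst[OF continuous_on_id]]) auto
  moreover have "continuous_on (X \<times> {0, 1}) (\<lambda>z. c (fst z))"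
    by (rule continuous_on_compose2[OF continuous_c continuous_on_fst[OF continuous_on_id]]) auto
  ultimately have "continuous_on (X \<times> {0, 1}) (\<lambda>z. (\<alpha> (fst z), (snd z + c (fst z)) mod 2))"
    by (intro continuous_on_Pair continuous_on_int_combine[where F = "\<lambda>k v. (k + v) mod 2"]
        continuous_on_snd continuous_on_id)
  then show ?thesis
    by (simp add: skew_def case_prod_unfold)
qed

lemma skew_image: "skew \<alpha> c ` (X \<times> {0, 1}) = X \<times> {0, 1}"
proof
  show "skew \<alpha> c ` (X \<times> {0, 1}) \<subseteq> X \<times> {0, 1}"
    using surj by (auto simp: skew_def)
  show "X \<times> {0, 1} \<subseteq> skew \<alpha> c ` (X \<times> {0, 1})"
  proof
    fix z :: "'a \<times> int" assume "z \<in> X \<times> {0, 1}"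
    then obtain y k where "z = (y, k)" "y \<in> X" "k \<in> {0, 1}" by blast
    define x where "x = inv_into X \<alpha> y"
    have "x \<in> X" "\<alpha> x = y"
      using \<open>y \<in> X\<close> surj unfolding x_def by (auto intro: inv_into_into f_inv_into_f)
    moreover have "((k - c x) mod 2 + c x) mod 2 = k"
      using \<open>k \<in> {0, 1}\<close> by (auto simp: mod_add_left_eq)
    ultimately have "skew \<alpha> c (x, (k - c x) mod 2) = (y, k)" "(x, (k - c x) mod 2) \<in> X \<times> {0, 1}"
      by (auto simp: skew_def)
    then show "z \<in> skew \<alpha> c ` (X \<times> {0, 1})"
      unfolding \<open>z = (y, k)\<close> by (metis image_eqI)
  qed
qed

lemma skew_inj: "inj_on (skew \<alpha> c) (X \<times> {0, 1})"
proof (rule inj_onI, clarify)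
  fix x y :: 'a and k l :: int
  assume "x \<in> X" "y \<in> X" "k \<in> {0, 1}" "l \<in> {0, 1}" "skew \<alpha> c (x, k) = skew \<alpha> c (y, l)"
  then have "x = y" "(k + c x) mod 2 = (l + c x) mod 2"
    using inj by (auto simp: skew_def dest: inj_onD)
  with \<open>k \<in> {0, 1}\<close> \<open>l \<in> {0, 1}\<close> show "x = y \<and> k = l"
    by auto presburger+
qed

sublocale skew_product: compact_invertible_system "X \<times> {0, 1}" "skew \<alpha> c"
  by unfold_locales (simp_all add: compact compact_Times skew_continuous skew_image skew_inj)

lemma periodic_spectrum_subset_skew:
  "periodic_spectrum X \<alpha> \<subseteq> periodic_spectrum (X \<times> {0, 1}) (skew \<alpha> c)"
proof
  fix p assume p: "p \<in> periodic_spectrum X \<alpha>"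
  then obtain l where l: "clock X \<alpha> p l"
    by (rule clock_if_periodic_spectrum)
  have "continuous_on (X \<times> {0, 1}) (\<lambda>z. l (fst z))"
    using l unfolding clock_def
    by (intro continuous_on_compose2[OF _ continuous_on_fst[OF continuous_on_id]]) auto
  with l have "clock (X \<times> {0, 1}) (skew \<alpha> c) p (\<lambda>z. l (fst z))"
    unfolding clock_def by (auto simp: skew_def)
  then show "p \<in> periodic_spectrum (X \<times> {0, 1}) (skew \<alpha> c)"
    using periodic_spectrum_if_clock[OF skew_image periodic_spectrum_pos[OF p]] by blast
qed

definition twisted_clock :: "nat \<Rightarrow> ('a \<Rightarrow> int) \<Rightarrow> bool" where
  "twisted_clock p l \<longleftrightarrow>
     continuous_on X l \<and> (\<forall>x\<in>X. int (2 * p) dvd l (\<alpha> x) - l x - 1 - int p * c x)"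

lemma twisted_clock_quotient:
  assumes l: "twisted_clock p l" and "p \<ge> 1"
  obtains j where "\<forall>x\<in>X. l (\<alpha> x) - l x - 1 = int p * j x" "\<forall>x\<in>X. 2 dvd j x - c x"
proof -
  define j where "j x = (l (\<alpha> x) - l x - 1) div int p" for x
  have "l (\<alpha> x) - l x - 1 = int p * j x \<and> 2 dvd j x - c x" if "x \<in> X" for x
  proof -
    have "int (2 * p) dvd l (\<alpha> x) - l x - 1 - int p * c x"
      using l that unfolding twisted_clock_def by blast
    then obtain t where "l (\<alpha> x) - l x - 1 - int p * c x = int (2 * p) * t" ..
    then have "l (\<alpha> x) - l x - 1 = int p * (c x + 2 * t)"
      by (simp add: algebra_simps)
    then show ?thesis
      using \<open>p \<ge> 1\<close> unfolding j_def by simp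
  qed
  then show thesis
    using that by blast
qed

lemma clock_if_twisted_clock:
  assumes "twisted_clock p l" "p \<ge> 1"
  shows "clock X \<alpha> p l"
proof -
  obtain j where "\<forall>x\<in>X. l (\<alpha> x) - l x - 1 = int p * j x"
    using twisted_clock_quotient[OF assms] by blast
  then show ?thesis
    using assms(1) unfolding clock_def twisted_clock_def by simp
qed

lemma skew_clock_if_twisted_clock:
  assumes "twisted_clock p l"
  shows "clock (X \<times> {0, 1}) (skew \<alpha> c) (2 * p) (\<lambda>z. l (fst z) + int p * snd z)"
  unfolding clock_def
proof
  have "continuous_on (X \<times> {0, 1}) (\<lambda>z. l (fst z))"
    using assms unfolding twisted_clock_def
    by (intro continuous_on_compose2[OF _ continuous_on_fst[OF continuous_on_id]]) auto
  then show "continuous_on (X \<times> {0, 1}) (\<lambda>z. l (fst z) + int p * snd z)"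
    by (intro continuous_on_int_combine[where F = "\<lambda>u v. u + int p * v"] continuous_on_snd
        continuous_on_id)
  show "\<forall>z\<in>X \<times> {0, 1}. int (2 * p) dvd
      (l (fst (skew \<alpha> c z)) + int p * snd (skew \<alpha> c z)) - (l (fst z) + int p * snd z) - 1"
  proof (clarify)
    fix x k assume "x \<in> X" "k \<in> {0 :: int, 1}"
    have "2 dvd (k + c x) mod 2 - k + c x"
      by presburger
    then obtain t where t: "(k + c x) mod 2 - k + c x = 2 * t" ..
    have "(l (\<alpha> x) + int p * ((k + c x) mod 2)) - (l x + int p * k) - 1 =
        (l (\<alpha> x) - l x - 1 - int p * c x) + int p * ((k + c x) mod 2 - k + c x)"
      by (simp add: algebra_simps)
    also have "\<dots> = (l (\<alpha> x) - l x - 1 - int p * c x) + int (2 * p) * t"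
      unfolding t by simp
    also have "int (2 * p) dvd \<dots>"
      using assms \<open>x \<in> X\<close> unfolding twisted_clock_def by (simp add: dvd_add)
    finally show "int (2 * p) dvd (l (fst (skew \<alpha> c (x, k))) + int p * snd (skew \<alpha> c (x, k)))
        - (l (fst (x, k)) + int p * snd (x, k)) - 1"
      by (simp add: skew_def)
  qed
qed

definition sheet_clocks :: "nat \<Rightarrow> ('a \<Rightarrow> int) \<Rightarrow> ('a \<Rightarrow> int) \<Rightarrow> bool" where
  "sheet_clocks q L\<^sub>0 L\<^sub>1 \<longleftrightarrow> continuous_on X L\<^sub>0 \<and> continuous_on X L\<^sub>1 \<and>
     (\<forall>x\<in>X. c x = 0 \<longrightarrow> int q dvd L\<^sub>0 (\<alpha> x) - L\<^sub>0 x - 1 \<and> int q dvd L\<^sub>1 (\<alpha> x) - L\<^sub>1 x - 1) \<and>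
     (\<forall>x\<in>X. c x = 1 \<longrightarrow> int q dvd L\<^sub>1 (\<alpha> x) - L\<^sub>0 x - 1 \<and> int q dvd L\<^sub>0 (\<alpha> x) - L\<^sub>1 x - 1)"

lemma sheet_clocks_if_skew_clock:
  assumes \<Lambda>: "clock (X \<times> {0, 1}) (skew \<alpha> c) q \<Lambda>"
  shows "sheet_clocks q (\<lambda>x. \<Lambda> (x, 0)) (\<lambda>x. \<Lambda> (x, 1))"
proof -
  have "continuous_on X (\<lambda>x. \<Lambda> (x, k))" if "k \<in> {0, 1}" for k
  proof (rule continuous_on_compose2[of "X \<times> {0, 1}" \<Lambda>])
    show "continuous_on (X \<times> {0, 1}) \<Lambda>"
      using \<Lambda> unfolding clock_def by blast
    show "continuous_on X (\<lambda>x. (x, k))"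
      by (intro continuous_on_Pair continuous_on_id continuous_on_const)
  qed (use that in auto)
  moreover have "int q dvd \<Lambda> (\<alpha> x, (k + c x) mod 2) - \<Lambda> (x, k) - 1"
    if "x \<in> X" "k \<in> {0, 1}" for x k
  proof -
    have "(x, k) \<in> X \<times> {0, 1}"
      using that by simp
    then have "int q dvd \<Lambda> (skew \<alpha> c (x, k)) - \<Lambda> (x, k) - 1"
      using \<Lambda> unfolding clock_def by blast
    then show ?thesis
      by (simp add: skew_def)
  qed
  ultimately show ?thesis
    unfolding sheet_clocks_def by fastforce
qed

lemma sheet_difference_step:
  assumes L: "sheet_clocks q L\<^sub>0 L\<^sub>1" and "x \<in> X"
  shows "c x = 0 \<Longrightarrow> int q dvd (L\<^sub>1 (\<alpha> x) - L\<^sub>0 (\<alpha> x)) - (L\<^sub>1 x - L\<^sub>0 x)"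
    and "c x = 1 \<Longrightarrow> int q dvd (L\<^sub>1 (\<alpha> x) - L\<^sub>0 (\<alpha> x)) + (L\<^sub>1 x - L\<^sub>0 x)"
proof -
  assume "c x = 0"
  then have "int q dvd (L\<^sub>1 (\<alpha> x) - L\<^sub>1 x - 1) - (L\<^sub>0 (\<alpha> x) - L\<^sub>0 x - 1)"
    using L \<open>x \<in> X\<close> unfolding sheet_clocks_def by (blast intro: dvd_diff)
  then show "int q dvd (L\<^sub>1 (\<alpha> x) - L\<^sub>0 (\<alpha> x)) - (L\<^sub>1 x - L\<^sub>0 x)"
    by (simp add: algebra_simps)
next
  assume "c x = 1"
  then have "int q dvd (L\<^sub>1 (\<alpha> x) - L\<^sub>0 x - 1) - (L\<^sub>0 (\<alpha> x) - L\<^sub>1 x - 1)"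
    using L \<open>x \<in> X\<close> unfolding sheet_clocks_def by (blast intro: dvd_diff)
  then show "int q dvd (L\<^sub>1 (\<alpha> x) - L\<^sub>0 (\<alpha> x)) + (L\<^sub>1 x - L\<^sub>0 x)"
    by (simp add: algebra_simps)
qed

lemma clock_glued_from_sheets:
  assumes L: "sheet_clocks q L\<^sub>0 L\<^sub>1" and "\<not> int q dvd 2 * a"
    and a: "\<forall>x\<in>X. int q dvd L\<^sub>1 x - L\<^sub>0 x - a \<or> int q dvd L\<^sub>1 x - L\<^sub>0 x + a"
  shows "clock X \<alpha> q (\<lambda>x. if int q dvd L\<^sub>1 x - L\<^sub>0 x - a then L\<^sub>0 x else L\<^sub>1 x)" (is "clock X \<alpha> q ?l")
  unfolding clock_def
proof (intro conjI ballI)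
  show "continuous_on X ?l"
    using L unfolding sheet_clocks_def
    by (intro continuous_on_int_combine[where F = "\<lambda>u v. if int q dvd u - v - a then v else u"]) auto
  fix x assume "x \<in> X"
  consider "c x = 0" | "c x = 1"
    using c_cases[OF \<open>x \<in> X\<close>] by blast
  then show "int q dvd ?l (\<alpha> x) - ?l x - 1"
  proof cases
    case 1
    with sheet_difference_step(1)[OF L \<open>x \<in> X\<close>]
    have "int q dvd L\<^sub>1 (\<alpha> x) - L\<^sub>0 (\<alpha> x) - a \<longleftrightarrow> int q dvd L\<^sub>1 x - L\<^sub>0 x - a"
      by (smt (verit, best) dvd_diff_right_iff)
    with 1 L \<open>x \<in> X\<close> show ?thesis
      unfolding sheet_clocks_def by simp
  next
    case 2
    with sheet_difference_step(2)[OF L \<open>x \<in> X\<close>]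
    have "int q dvd L\<^sub>1 (\<alpha> x) - L\<^sub>0 (\<alpha> x) - a \<longleftrightarrow> int q dvd L\<^sub>1 x - L\<^sub>0 x + a"
      by (smt (verit, ccfv_SIG) dvd_add_right_iff)
    moreover have "\<not> (int q dvd L\<^sub>1 x - L\<^sub>0 x - a \<and> int q dvd L\<^sub>1 x - L\<^sub>0 x + a)"
      using \<open>\<not> int q dvd 2 * a\<close> by (smt (verit, ccfv_SIG) dvd_add_right_iff)
    ultimately show ?thesis
      using 2 a L \<open>x \<in> X\<close> unfolding sheet_clocks_def by auto
  qed
qed

lemma sheet_difference_constant:
  assumes L: "sheet_clocks q L\<^sub>0 L\<^sub>1" and "q \<ge> 1" and "q \<notin> periodic_spectrum X \<alpha>"
  obtains a where "0 \<le> a" "a < int q" "int q dvd 2 * a" "\<forall>x\<in>X. int q dvd L\<^sub>1 x - L\<^sub>0 x - a"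
proof -
  have "continuous_on X (\<lambda>x. L\<^sub>1 x - L\<^sub>0 x)"
    using L unfolding sheet_clocks_def by (intro continuous_on_int_combine[where F = "(-)"]) auto
  moreover have "int q > 0"
    using \<open>q \<ge> 1\<close> by simp
  moreover have "\<forall>x\<in>X. int q dvd (L\<^sub>1 (\<alpha> x) - L\<^sub>0 (\<alpha> x)) - (L\<^sub>1 x - L\<^sub>0 x) \<or>
      int q dvd (L\<^sub>1 (\<alpha> x) - L\<^sub>0 (\<alpha> x)) + (L\<^sub>1 x - L\<^sub>0 x)"
    using sheet_difference_step[OF L] c_cases by blast
  ultimately obtain a where a: "\<forall>x\<in>X. int q dvd L\<^sub>1 x - L\<^sub>0 x - a \<or> int q dvd L\<^sub>1 x - L\<^sub>0 x + a"
    by (rule constant_mod_up_to_sign)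
  have "int q dvd 2 * a"
  proof (rule ccontr)
    assume "\<not> int q dvd 2 * a"
    from clock_glued_from_sheets[OF L this a] have "q \<in> periodic_spectrum X \<alpha>"
      by (rule periodic_spectrum_if_clock[OF surj \<open>q \<ge> 1\<close>])
    with \<open>q \<notin> periodic_spectrum X \<alpha>\<close> show False ..
  qed
  define r where "r = a mod int q"
  have "int q dvd a - r"
    unfolding r_def by (simp add: mod_eq_dvd_iff[symmetric])
  have "0 \<le> r" "r < int q"
    unfolding r_def using \<open>int q > 0\<close> by simp_all
  moreover have "int q dvd 2 * r"
    using \<open>int q dvd 2 * a\<close> \<open>int q dvd a - r\<close> by (smt (verit) dvd_add_right_iff)
  moreover have "\<forall>x\<in>X. int q dvd L\<^sub>1 x - L\<^sub>0 x - r"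
    using a \<open>int q dvd 2 * a\<close> \<open>int q dvd a - r\<close> by (smt (verit) dvd_add_right_iff)
  ultimately show thesis
    using that by blast
qed

lemma sheet_zero_step:
  assumes L: "sheet_clocks q L\<^sub>0 L\<^sub>1" and a: "\<forall>x\<in>X. int q dvd L\<^sub>1 x - L\<^sub>0 x - a" and "x \<in> X"
  shows "int q dvd L\<^sub>0 (\<alpha> x) - L\<^sub>0 x - 1 - a * c x"
proof (cases "c x = 0")
  case False
  then have "c x = 1" using c_cases[OF \<open>x \<in> X\<close>] by simp
  have "L\<^sub>0 (\<alpha> x) - L\<^sub>0 x - 1 - a * c x = (L\<^sub>0 (\<alpha> x) - L\<^sub>1 x - 1) + (L\<^sub>1 x - L\<^sub>0 x - a)"
    using \<open>c x = 1\<close> by simp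
  also have "int q dvd \<dots>"
    using L \<open>c x = 1\<close> a \<open>x \<in> X\<close> unfolding sheet_clocks_def by (intro dvd_add) auto
  finally show ?thesis .
qed (use L \<open>x \<in> X\<close> in \<open>simp add: sheet_clocks_def\<close>)

lemma twisted_clock_if_skew_periodic_spectrum:
  assumes q: "q \<in> periodic_spectrum (X \<times> {0, 1}) (skew \<alpha> c)" and "q \<notin> periodic_spectrum X \<alpha>"
  obtains p l where "q = 2 * p" "twisted_clock p l"
proof -
  have "q \<ge> 1"
    using periodic_spectrum_pos[OF q] .
  obtain \<Lambda> where \<Lambda>: "clock (X \<times> {0, 1}) (skew \<alpha> c) q \<Lambda>"
    using skew_product.clock_if_periodic_spectrum[OF q] .
  define L\<^sub>0 L\<^sub>1 where "L\<^sub>0 x = \<Lambda> (x, 0)" and "L\<^sub>1 x = \<Lambda> (x, 1)" for x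
  have L: "sheet_clocks q L\<^sub>0 L\<^sub>1"
    unfolding L\<^sub>0_def L\<^sub>1_def by (rule sheet_clocks_if_skew_clock[OF \<Lambda>])
  obtain a where "0 \<le> a" "a < int q" "int q dvd 2 * a"
    and a: "\<forall>x\<in>X. int q dvd L\<^sub>1 x - L\<^sub>0 x - a"
    using sheet_difference_constant[OF L \<open>q \<ge> 1\<close> assms(2)] by blast
  have L\<^sub>0: "continuous_on X L\<^sub>0" "\<forall>x\<in>X. int q dvd L\<^sub>0 (\<alpha> x) - L\<^sub>0 x - 1 - a * c x"
    using L sheet_zero_step[OF L a] unfolding sheet_clocks_def by blast+
  from dvd_double_cases[OF \<open>0 \<le> a\<close> \<open>a < int q\<close> \<open>int q dvd 2 * a\<close>]
  show thesis
  proof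
    assume "a = 0"
    then have "clock X \<alpha> q L\<^sub>0"
      using L\<^sub>0 unfolding clock_def by simp
    then have "q \<in> periodic_spectrum X \<alpha>"
      by (rule periodic_spectrum_if_clock[OF surj \<open>q \<ge> 1\<close>])
    with assms(2) show thesis ..
  next
    assume "int q = 2 * a"
    then have "q = 2 * nat a" "int (nat a) = a"
      by simp_all
    moreover have "twisted_clock (nat a) L\<^sub>0"
      unfolding twisted_clock_def using L\<^sub>0 \<open>int q = 2 * a\<close> by simp
    ultimately show thesis
      using that by blast
  qed
qed

lemma periodic_spectra_if_twisted_clock:
  assumes "twisted_clock p l" "p \<ge> 1"
  shows "p \<in> periodic_spectrum X \<alpha>" "2 * p \<in> periodic_spectrum (X \<times> {0, 1}) (skew \<alpha> c)"
  using periodic_spectrum_if_clock[OF surj assms(2) clock_if_twisted_clock[OF assms]]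
    periodic_spectrum_if_clock[OF skew_image _ skew_clock_if_twisted_clock[OF assms(1)]] assms(2)
  by simp_all

lemma twisted_clock_multiple:
  assumes l: "twisted_clock p l" "p \<ge> 1"
    and L: "L \<in> periodic_spectrum X \<alpha>" "p dvd L" "odd (L div p)"
  obtains l' where "twisted_clock L l'"
proof -
  obtain j where j: "\<forall>x\<in>X. l (\<alpha> x) - l x - 1 = int p * j x" "\<forall>x\<in>X. 2 dvd j x - c x"
    using twisted_clock_quotient[OF l] by blast
  obtain \<Lambda> where \<Lambda>: "clock X \<alpha> L \<Lambda>"
    using clock_if_periodic_spectrum[OF L(1)] .
  obtain s where s: "continuous_on X s"
    "\<forall>x\<in>X. (\<Lambda> (\<alpha> x) - l (\<alpha> x)) - (\<Lambda> x - l x) = int p * (s (\<alpha> x) - s x)"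
    using clock_difference_divisible[OF clock_if_twisted_clock[OF l] \<Lambda> L(2) l(2)] by blast
  define l' where "l' x = \<Lambda> x + int L * s x" for x
  have "continuous_on X l'"
    using \<Lambda> s(1) unfolding l'_def clock_def
    by (intro continuous_on_int_combine[where F = "\<lambda>u v. u + int L * v"]) auto
  moreover have "int (2 * L) dvd l' (\<alpha> x) - l' x - 1 - int L * c x" if "x \<in> X" for x
  proof -
    define r where "r = int (L div p)"
    have L_eq: "int L = int p * r"
      unfolding r_def using L(2) by (metis dvd_mult_div_cancel of_nat_mult)
    have "int L dvd \<Lambda> (\<alpha> x) - \<Lambda> x - 1"
      using \<Lambda> that unfolding clock_def by blast
    then obtain k where k: "\<Lambda> (\<alpha> x) - \<Lambda> x - 1 = int L * k" ..
    have "int p * (s (\<alpha> x) - s x) = (\<Lambda> (\<alpha> x) - l (\<alpha> x)) - (\<Lambda> x - l x)"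
      using s(2) that by simp
    also have "\<dots> = (\<Lambda> (\<alpha> x) - \<Lambda> x - 1) - (l (\<alpha> x) - l x - 1)"
      by simp
    also have "\<dots> = int p * (r * k - j x)"
      using k j(1) that unfolding L_eq by (simp add: algebra_simps)
    finally have "int p * (s (\<alpha> x) - s x) = int p * (r * k - j x)" .
    then have s_diff: "s (\<alpha> x) - s x = r * k - j x"
      using \<open>p \<ge> 1\<close> by simp
    have "l' (\<alpha> x) - l' x - 1 - int L * c x =
        (\<Lambda> (\<alpha> x) - \<Lambda> x - 1) + int L * (s (\<alpha> x) - s x) - int L * c x"
      unfolding l'_def by (simp add: algebra_simps)
    also have "\<dots> = int L * ((1 + r) * k - (j x - c x) - 2 * c x)"
      unfolding k s_diff by (simp add: algebra_simps)
    finally have "l' (\<alpha> x) - l' x - 1 - int L * c x = int L * ((1 + r) * k - (j x - c x) - 2 * c x)" .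
    moreover have "2 dvd (1 + r) * k - (j x - c x) - 2 * c x"
    proof -
      have "even (1 + r)"
        using L(3) unfolding r_def by simp
      then have "2 dvd (1 + r) * k"
        by (rule dvd_mult2)
      from dvd_diff[OF dvd_diff[OF this j(2)[rule_format, OF that]] dvd_triv_left]
      show ?thesis .
    qed
    then have "int L * 2 dvd int L * ((1 + r) * k - (j x - c x) - 2 * c x)"
      by (rule mult_dvd_mono[OF dvd_refl])
    ultimately show ?thesis
      by (simp add: mult.commute)
  qed
  ultimately show thesis
    using that unfolding twisted_clock_def by blast
qed

lemma K0_mod2_eq_if_twisted_clock:
  assumes l: "twisted_clock p l" and p: "p = 2 ^ k * m" "odd m"
    and f: "continuous_on X f" "K0_eq X \<alpha> (\<lambda>x. 2 ^ k * f x) (\<lambda>x. 1)"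
  shows "K0_mod2_eq X \<alpha> c f"
proof -
  have "p \<ge> 1"
    using p by (simp add: odd_pos Suc_le_eq)
  obtain j where j: "\<forall>x\<in>X. l (\<alpha> x) - l x - 1 = int p * j x" "\<forall>x\<in>X. 2 dvd j x - c x"
    using twisted_clock_quotient[OF l \<open>p \<ge> 1\<close>] by blast
  obtain h where h: "continuous_on X h" "\<forall>x\<in>X. 2 ^ k * f x - 1 = h (\<alpha> x) - h x"
    using f(2) unfolding K0_eq_def coboundary_iff_difference by blast
  have F_diff: "(l (\<alpha> x) + h (\<alpha> x)) - (l x + h x) = 2 ^ k * (int m * j x + f x)" if "x \<in> X" for x
  proof -
    have "(l (\<alpha> x) + h (\<alpha> x)) - (l x + h x) = (l (\<alpha> x) - l x - 1) + (h (\<alpha> x) - h x) + 1"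
      by simp
    also have "\<dots> = int p * j x + 2 ^ k * f x"
      using j(1)[rule_format, OF that] h(2)[rule_format, OF that] by linarith
    finally show ?thesis
      using p(1) by (simp add: algebra_simps)
  qed
  have "(2::int) ^ k > 0"
    by simp
  moreover have "continuous_on X (\<lambda>x. l x + h x)"
    using l h(1) unfolding twisted_clock_def by (intro continuous_on_int_combine[where F = "(+)"]) auto
  moreover have "\<forall>x\<in>X. 2 ^ k dvd (l (\<alpha> x) + h (\<alpha> x)) - (l x + h x)"
    using F_diff by simp
  ultimately obtain s where s: "continuous_on X s"
    "\<forall>x\<in>X. (l (\<alpha> x) + h (\<alpha> x)) - (l x + h x) = 2 ^ k * (s (\<alpha> x) - s x)"
    by (rule coboundary_divisible)
  have "2 dvd c x - f x - (s (\<alpha> x) - s x)" if "x \<in> X" for x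
  proof -
    have "s (\<alpha> x) - s x = int m * j x + f x"
      using F_diff[OF that] s(2) that by simp
    then have "c x - f x - (s (\<alpha> x) - s x) = (c x - j x) + (1 - int m) * j x - 2 * f x"
      by (simp add: algebra_simps)
    moreover have "2 dvd c x - j x" "2 dvd (1 - int m) * j x"
      using j(2) that p(2) by (simp_all add: dvd_diff_commute)
    ultimately show ?thesis
      using dvd_diff[OF dvd_add dvd_triv_left] by metis
  qed
  then show ?thesis
    using K0_mod2_eq_if_even_difference[OF continuous_c f(1) s(1)] by blast
qed

lemma skew_periodic_spectrum_subset:
  "periodic_spectrum (X \<times> {0, 1}) (skew \<alpha> c) \<subseteq>
    (\<lambda>p. 2 * p) ` periodic_spectrum X \<alpha> \<union> periodic_spectrum X \<alpha>"
proof
  fix q assume q: "q \<in> periodic_spectrum (X \<times> {0, 1}) (skew \<alpha> c)"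
  show "q \<in> (\<lambda>p. 2 * p) ` periodic_spectrum X \<alpha> \<union> periodic_spectrum X \<alpha>"
  proof (cases "q \<in> periodic_spectrum X \<alpha>")
    case False
    then obtain p l where "q = 2 * p" "twisted_clock p l"
      using twisted_clock_if_skew_periodic_spectrum[OF q] by blast
    moreover from this have "p \<ge> 1"
      using periodic_spectrum_pos[OF q] by simp
    ultimately show ?thesis
      using periodic_spectra_if_twisted_clock(1) by blast
  qed simp
qed

lemma double_periodic_spectrum_subset_skew:
  assumes l: "twisted_clock p l" and p: "p = 2 ^ k * m" "odd m"
    and not_in: "2 ^ Suc k \<notin> periodic_spectrum X \<alpha>"
  shows "(\<lambda>p. 2 * p) ` periodic_spectrum X \<alpha> \<subseteq> periodic_spectrum (X \<times> {0, 1}) (skew \<alpha> c)"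
proof safe
  fix p' assume p': "p' \<in> periodic_spectrum X \<alpha>"
  have "p \<ge> 1"
    using p by (simp add: odd_pos Suc_le_eq)
  define L where "L = lcm p p'"
  have "L \<in> periodic_spectrum X \<alpha>"
    unfolding L_def using periodic_spectrum_lcm[OF periodic_spectra_if_twisted_clock(1)[OF l \<open>p \<ge> 1\<close>] p'] .
  moreover have "p dvd L"
    unfolding L_def by simp
  moreover have "odd (L div p)"
  proof -
    have "\<not> 2 ^ Suc k dvd L"
      using periodic_spectrum_dvd[OF \<open>L \<in> periodic_spectrum X \<alpha>\<close>] not_in by blast
    with \<open>p dvd L\<close> show ?thesis
      unfolding p(1) by (rule odd_div_if_not_dvd)
  qed
  ultimately obtain l' where "twisted_clock L l'"
    using twisted_clock_multiple[OF l \<open>p \<ge> 1\<close>] by blast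
  then have "2 * L \<in> periodic_spectrum (X \<times> {0, 1}) (skew \<alpha> c)"
    using periodic_spectra_if_twisted_clock(2) periodic_spectrum_pos[OF \<open>L \<in> _\<close>] by blast
  moreover have "2 * p' dvd 2 * L"
    unfolding L_def by simp
  ultimately show "2 * p' \<in> periodic_spectrum (X \<times> {0, 1}) (skew \<alpha> c)"
    using skew_product.periodic_spectrum_dvd by blast
qed

end

lemma skew_system_if_cantor_minimal_system:
  assumes "cantor_minimal_system X \<alpha>" "continuous_on X c" "c ` X \<subseteq> {0, 1}"
  shows "skew_system X \<alpha> c"
proof -
  obtain \<beta> where "homeomorphism X X \<alpha> \<beta>"
    using assms(1) unfolding cantor_minimal_system_def by blast
  then have "continuous_on X \<alpha>" "\<alpha> ` X = X" "inj_on \<alpha> X"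
    unfolding homeomorphism_def by (auto intro: inj_on_inverseI)
  moreover have "compact X" "X \<noteq> {}"
    using assms(1) unfolding cantor_minimal_system_def cantor_set_def by simp_all
  moreover have "\<And>Y. Y \<subseteq> X \<Longrightarrow> closed Y \<Longrightarrow> \<alpha> ` Y = Y \<Longrightarrow> Y = {} \<or> Y = X"
    using assms(1) unfolding cantor_minimal_system_def by blast
  ultimately show ?thesis
    using assms(2,3) by unfold_locales
qed

theorem lemma4p6:
  fixes X :: "'a::metric_space set" and \<alpha> :: "'a \<Rightarrow> 'a" and c :: "'a \<Rightarrow> int"
  assumes "cantor_minimal_system X \<alpha>"
    and "continuous_on X c" and "c ` X \<subseteq> {0, 1}"
    and "periodic_spectrum X \<alpha> \<noteq> periodic_spectrum (X \<times> {0, 1}) (skew \<alpha> c)"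
  shows "\<exists>n::nat. n \<ge> 1 \<and> 2 ^ (n - 1) \<in> periodic_spectrum X \<alpha> \<and>
           2 ^ n \<notin> periodic_spectrum X \<alpha> \<and>
           periodic_spectrum (X \<times> {0, 1}) (skew \<alpha> c) =
             (\<lambda>p. 2 * p) ` periodic_spectrum X \<alpha> \<union> periodic_spectrum X \<alpha> \<and>
           (\<forall>f::'a \<Rightarrow> int. continuous_on X f \<and>
              K0_eq X \<alpha> (\<lambda>x. 2 ^ (n - 1) * f x) (\<lambda>x. 1)
              \<longrightarrow> K0_mod2_eq X \<alpha> c f)"
proof -
  interpret skew_system X \<alpha> c
    using skew_system_if_cantor_minimal_system[OF assms(1-3)] .
  obtain q where q: "q \<in> periodic_spectrum (X \<times> {0, 1}) (skew \<alpha> c)" "q \<notin> periodic_spectrum X \<alpha>"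
    using assms(4) periodic_spectrum_subset_skew by blast
  then obtain p l where "q = 2 * p" and l: "twisted_clock p l"
    by (rule twisted_clock_if_skew_periodic_spectrum)
  then have "p \<ge> 1"
    using periodic_spectrum_pos[OF q(1)] by simp
  then have "p \<in> periodic_spectrum X \<alpha>" "2 * p \<notin> periodic_spectrum X \<alpha>"
    using periodic_spectra_if_twisted_clock(1)[OF l] q(2) \<open>q = 2 * p\<close> by simp_all
  moreover obtain k m where km: "p = 2 ^ k * m" "odd m"
    using two_power_odd_decomposition[of p] \<open>p \<ge> 1\<close> by (metis less_eq_Suc_le One_nat_def)
  ultimately have "2 ^ k \<in> periodic_spectrum X \<alpha>" and not_in: "2 ^ Suc k \<notin> periodic_spectrum X \<alpha>"
    by (rule periodic_spectrum_two_power)+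
  show ?thesis
  proof (intro exI[of _ "Suc k"] conjI allI impI; (elim conjE)?)
    show "2 ^ (Suc k - 1) \<in> periodic_spectrum X \<alpha>"
      using \<open>2 ^ k \<in> periodic_spectrum X \<alpha>\<close> by simp
    show "periodic_spectrum (X \<times> {0, 1}) (skew \<alpha> c) =
        (\<lambda>p. 2 * p) ` periodic_spectrum X \<alpha> \<union> periodic_spectrum X \<alpha>"
      by (rule equalityI[OF skew_periodic_spectrum_subset
            Un_least[OF double_periodic_spectrum_subset_skew[OF l km not_in] periodic_spectrum_subset_skew]])
    show "K0_mod2_eq X \<alpha> c f"
      if "continuous_on X f" "K0_eq X \<alpha> (\<lambda>x. 2 ^ (Suc k - 1) * f x) (\<lambda>x. 1)" for f
      using K0_mod2_eq_if_twisted_clock[OF l km] that by simp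
  qed (use not_in in simp_all)
qed

end
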